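(* Assume $s_1=\cdots=s_m=s$ and let $\delta\in\{1,\dots,s^m\}$. Let $v\in\{0,\dots,m-1\}$ be such that $s^v\le\delta\le s^{v+1}$. If $\delta^\perp$ is a positive integer with $\delta^\perp\le\left\lfloor\left(s-\frac{\delta}{s^v}+1\right)s^{m-v-1}\right\rfloor$, then $$\{N\in\Delta(s,\dots,s)\mid D^\perp(N)<\delta^\perp\}\subseteq\{N\in\Delta(s,\dots,s)\mid D(N)\ge\delta\}.$$
   Context: $\Delta(s,\dots,s)=\{X_1^{i_1}\cdots X_m^{i_m}\mid 0\le i_t<s,\ t=1,\dots,m\}$. For $N=X_1^{i_1}\cdots X_m^{i_m}$: $D(N)=\prod_{t=1}^m(s-i_t)$ and $D^\perp(N)=\prod_{t=1}^m(i_t+1)$. *)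

theory Defs
  imports Complex_Main
begin

text \<open>A monomial X_1^{i_1}...X_m^{i_m} is represented by its exponent vector
  i :: nat \<Rightarrow> nat, with index t ranging over {0..<m} (t = 0 corresponds to X_1),
  and with i t = 0 for t \<ge> m so that the representation is unique.\<close>

definition Delta :: "nat \<Rightarrow> nat \<Rightarrow> (nat \<Rightarrow> nat) set" where
  "Delta s m = {i. (\<forall>t<m. i t < s) \<and> (\<forall>t\<ge>m. i t = 0)}"

definition D :: "nat \<Rightarrow> nat \<Rightarrow> (nat \<Rightarrow> nat) \<Rightarrow> nat" where
  "D s m i = (\<Prod>t<m. (s - i t))"

definition Dperp :: "nat \<Rightarrow> (nat \<Rightarrow> nat) \<Rightarrow> nat" where
  "Dperp m i = (\<Prod>t<m. (i t + 1))"

end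

theory Submission
  imports Defs
begin

text \<open>Write a t = i t + 1 \<in> [1, s], so that D(N) is the product of the s + 1 - a t and
  Dperp(N) the product of the a t. For every splitting j + l = m - 1 these products satisfy
  (s + 1) s^(m - 1) \<le> s^j D(N) + s^l Dperp(N),
  proved by induction on m: adjoining a factor, one reuses the inequality for m - 1 with the
  splitting (j, l - 1) when Dperp \<ge> s^j and with (j - 1, l) when Dperp \<le> s^j.
  Taking l = v, the hypothesis on \<delta>perp turns Dperp(N) < \<delta>perp into
  s^v Dperp(N) + s^v \<le> (s + 1) s^(m - 1) - \<delta> s^(m - v - 1), and the inequality then
  forces D(N) > \<delta>.\<close>

lemma complement_step_shift_right:
  fixes s x y R e :: real
  assumes "(s + 1) * e \<le> y + R" and "e \<le> R" and "1 \<le> x" and "x \<le> s + 1"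
  shows "(s + 1) * s * e \<le> y * (s + 1 - x) + s * x * R"
proof -
  have "((s + 1) * e - R) * (s + 1 - x) \<le> y * (s + 1 - x)"
    using assms by (intro mult_right_mono) auto
  moreover have "0 \<le> (s + 1) * (x - 1) * (R - e)"
    using assms by simp
  moreover have "((s + 1) * e - R) * (s + 1 - x) + s * x * R - (s + 1) * s * e
      = (s + 1) * (x - 1) * (R - e)"
    by (simp add: algebra_simps)
  ultimately show ?thesis by linarith
qed

lemma complement_step_shift_left:
  fixes s x y Q e :: real
  assumes "(s + 1) * e \<le> y + Q" and "Q \<le> s * e" and "0 \<le> s" and "x \<le> s"
  shows "(s + 1) * s * e \<le> s * y * (s + 1 - x) + x * Q"
proof -
  have "s * ((s + 1) * e - Q) * (s + 1 - x) \<le> s * y * (s + 1 - x)"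
    using assms by (intro mult_right_mono mult_left_mono) auto
  moreover have "0 \<le> (s + 1) * (s - x) * (s * e - Q)"
    using assms by simp
  moreover have "s * ((s + 1) * e - Q) * (s + 1 - x) + x * Q - (s + 1) * s * e
      = (s + 1) * (s - x) * (s * e - Q)"
    by (simp add: algebra_simps)
  ultimately show ?thesis by linarith
qed

lemma prod_complement_power_bound:
  fixes a :: "nat \<Rightarrow> real" and s :: real
  assumes "1 \<le> s" and "\<And>t. t < Suc (j + l) \<Longrightarrow> 1 \<le> a t \<and> a t \<le> s"
  shows "(s + 1) * s ^ (j + l)
    \<le> s ^ j * (\<Prod>t<Suc (j + l). s + 1 - a t) + s ^ l * (\<Prod>t<Suc (j + l). a t)"
  using assms(2)
proof (induction "j + l" arbitrary: j l)
  case 0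
  then show ?case by simp
next
  case (Suc n)
  define B where "B = (\<Prod>t<Suc n. s + 1 - a t)"
  define P where "P = (\<Prod>t<Suc n. a t)"
  define x where "x = a (Suc n)"
  have a_bounds: "1 \<le> a t \<and> a t \<le> s" if "t \<le> Suc n" for t
    using Suc.prems Suc.hyps(2) that by simp
  have x: "1 \<le> x" "x \<le> s" using a_bounds x_def by auto
  have P_ge: "1 \<le> P" using a_bounds unfolding P_def by (intro prod_ge_1) auto
  have P_le: "P \<le> s ^ Suc n"
    using assms(1) unfolding P_def
    by (intro prod_le_power) (auto dest!: a_bounds[OF less_imp_le])
  have IH: "(s + 1) * s ^ n \<le> s ^ j' * B + s ^ l' * P" if "j' + l' = n" for j' l'
    using Suc.hyps(1)[of j' l'] a_bounds that unfolding B_def P_def by simp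
  have "(s + 1) * s * s ^ n \<le> s ^ j * (B * (s + 1 - x)) + s ^ l * (P * x)"
  proof (cases "s ^ j \<le> P \<and> 0 < l")
    case True
    then obtain l' where l: "l = Suc l'" by (auto dest: gr0_implies_Suc)
    have "s ^ n \<le> s ^ l' * P"
      using True Suc.hyps(2) l assms(1) by (auto simp: power_add intro: mult_left_mono)
    from complement_step_shift_right[OF IH _ x(1)] this Suc.hyps(2) l x(2)
    show ?thesis by (simp add: algebra_simps)
  next
    case False
    have "s ^ j \<ge> P"
      using False P_le Suc.hyps(2) by (cases l) auto
    moreover have "0 < j"
      using False P_ge Suc.hyps(2) by (cases j) auto
    then obtain j' where j: "j = Suc j'" by (auto dest: gr0_implies_Suc)
    ultimately have "s ^ l * P \<le> s * s ^ n"
      using Suc.hyps(2) assms(1) by (auto simp: power_add mult.commute intro: mult_left_mono)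
    from complement_step_shift_left[OF IH this _ x(2)] Suc.hyps(2) j assms(1)
    show ?thesis by (simp add: algebra_simps)
  qed
  then show ?case
    unfolding B_def P_def x_def Suc.hyps(2)[symmetric] by (simp add: algebra_simps)
qed

lemma D_Dperp_power_bound:
  assumes "N \<in> Delta s m" and "j + l + 1 = m"
  shows "(real s + 1) * real s ^ (j + l)
    \<le> real s ^ j * real (D s m N) + real s ^ l * real (Dperp m N)"
proof -
  have m: "m = Suc (j + l)" using assms(2) by simp
  have N_lt: "N t < s" if "t < m" for t
    using assms(1) that unfolding Delta_def by auto
  have a_bounds: "1 \<le> real (N t + 1) \<and> real (N t + 1) \<le> real s" if "t < m" for t
    using N_lt[OF that] by simp
  have "1 \<le> real s" using a_bounds[of 0] m by simp
  moreover have "real (D s m N) = (\<Prod>t<m. real s + 1 - real (N t + 1))"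
    unfolding D_def using N_lt by (auto intro!: prod.cong simp: of_nat_diff less_imp_le)
  moreover have "real (Dperp m N) = (\<Prod>t<m. real (N t + 1))"
    unfolding Dperp_def by simp
  ultimately show ?thesis
    using prod_complement_power_bound[of "real s" j l "\<lambda>t. real (N t + 1)"] a_bounds
    unfolding m by presburger
qed

theorem mainTheorem3:
  fixes s m \<delta> v \<delta>perp :: nat
  assumes "s \<ge> 1"
    and "1 \<le> \<delta>" and "\<delta> \<le> s ^ m"
    and "v < m"
    and "s ^ v \<le> \<delta>" and "\<delta> \<le> s ^ (v + 1)"
    and "0 < \<delta>perp"
    and "int \<delta>perp \<le> \<lfloor>(real s - real \<delta> / real s ^ v + 1) * real s ^ (m - v - 1)\<rfloor>"
  shows "{N \<in> Delta s m. Dperp m N < \<delta>perp} \<subseteq> {N \<in> Delta s m. D s m N \<ge> \<delta>}"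
proof safe
  fix N assume N: "N \<in> Delta s m" "Dperp m N < \<delta>perp"
  define S where "S = real s"
  define j where "j = m - v - 1"
  have S: "1 \<le> S" using assms(1) S_def by simp
  have "real (Dperp m N) + 1 \<le> real \<delta>perp"
    using N(2) by linarith
  also have "\<dots> \<le> (S - real \<delta> / S ^ v + 1) * S ^ j"
    using assms(8) unfolding S_def j_def by (metis le_floor_iff of_int_of_nat_eq)
  finally have "real (Dperp m N) + 1 \<le> (S - real \<delta> / S ^ v + 1) * S ^ j" .
  then have "S ^ v * (real (Dperp m N) + 1) \<le> (S + 1) * S ^ (j + v) - real \<delta> * S ^ j"
    using S by (simp add: field_simps power_add)
  moreover have "(S + 1) * S ^ (j + v) \<le> S ^ j * real (D s m N) + S ^ v * real (Dperp m N)"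
    using D_Dperp_power_bound[OF N(1), of j v] assms(4) unfolding S_def j_def by simp
  ultimately have "S ^ v + S ^ j * real \<delta> \<le> S ^ j * real (D s m N)"
    by (simp add: algebra_simps)
  moreover have "0 < S ^ v" using S by simp
  ultimately have "S ^ j * real \<delta> < S ^ j * real (D s m N)"
    by linarith
  then show "\<delta> \<le> D s m N"
    using S by (simp add: mult_less_cancel_left_pos)
qed

end
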